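(* Let $F$ be a monotonic neighborhood frame. There exists a neighborhood frame $G$ with $\mathrm{Th}_{L_=}(G)=\mathrm{Th}_{L_=}(F)$ such that there is a surjective bounded morphism $f:G\to\mathrm{ue}\,F$. Moreover, if $\mathcal K_0$ is either the class of monotonic neighborhood frames or the class of quasi-filter neighborhood frames, and $F\in\mathcal K_0$, then $G$ can be taken in $\mathcal K_0$.
   Context: A neighborhood frame is a pair $F=(F,N^F)$ with $N^F: F\to\mathscr P(\mathscr P(F))$. It is monotonic if each $N^F(w)$ is closed under supersets; quasi-filter if it is monotonic and each $N^F(w)$ is closed under intersections of nonempty finite families. $L_=$ is the least set of formulas containing equality atoms and closed under Boolean combinations, existential quantification, and formation of $x\,\Box_y\,\phi$ ($y$ bound). Satisfaction: as in first-order logic, with $F\models w\,\Box_y\,\phi(y)$ iff $\{v\in F: F\models\phi(v)\}\in N^F(w)$. $\mathrm{Th}_{L_=}(F)$ is the set of $L_=$-sentences true in $F$. A map $f:F\to F'$ is a bounded morphism if for all $w\in F$, $U'\subseteq F'$: $f^{-1}(U')\in N^F(w)\iff U'\in N^{F'}(f(w))$. For a monotonic frame $F$, $F^+=(\mathscr P(F),\Box^F)$ with $\Box^F(X)=\{w: X\in N^F(w)\}$. For a Boolean algebra with monotone operator $(A,\Box)$, $\mathrm{Uf}(A)$ is its set of ultrafilters, $[a]=\{u: a\in u\}$, and closed sets are intersections of sets $[a]$. The ultrafilter frame $\mathrm{Uf}(A)$ has $U\in N^\sigma(u)$ iff there is a closed $K\subseteq U$ such that $[a]\supseteq K$ implies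 $\Box(a)\in u$ for all $a\in A$. The ultrafilter extension is $\mathrm{ue}\,F=\mathrm{Uf}(F^+)$. *)

theory Defs
  imports Main
begin

type_synonym 'a nframe = "'a set \<times> ('a \<Rightarrow> 'a set set)"

definition pts :: "'a nframe \<Rightarrow> 'a set" where "pts F = fst F"
definition nb :: "'a nframe \<Rightarrow> 'a \<Rightarrow> 'a set set" where "nb F = snd F"

definition nframe :: "'a nframe \<Rightarrow> bool" where
  "nframe F \<longleftrightarrow> (\<forall>w\<in>pts F. nb F w \<subseteq> Pow (pts F))"

definition monotonic :: "'a nframe \<Rightarrow> bool" where
  "monotonic F \<longleftrightarrow> nframe F \<and>
     (\<forall>w\<in>pts F. \<forall>X Y. X \<in> nb F w \<and> X \<subseteq> Y \<and> Y \<subseteq> pts F \<longrightarrow> Y \<in> nb F w)"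

definition quasi_filter :: "'a nframe \<Rightarrow> bool" where
  "quasi_filter F \<longleftrightarrow> monotonic F \<and>
     (\<forall>w\<in>pts F. \<forall>S. finite S \<and> S \<noteq> {} \<and> S \<subseteq> nb F w \<longrightarrow> \<Inter>S \<in> nb F w)"

datatype form =
    Eq nat nat
  | Neg form
  | Conj form form
  | Ex nat form
  | Box nat nat form   \<comment> \<open>Box x y phi is x box_y phi, with y bound\<close>

fun fv :: "form \<Rightarrow> nat set" where
  "fv (Eq x y) = {x, y}"
| "fv (Neg p) = fv p"
| "fv (Conj p q) = fv p \<union> fv q"
| "fv (Ex x p) = fv p - {x}"
| "fv (Box x y p) = insert x (fv p - {y})"

definition sentence :: "form \<Rightarrow> bool" where "sentence p \<longleftrightarrow> fv p = {}"

fun sat :: "'a nframe \<Rightarrow> (nat \<Rightarrow> 'a) \<Rightarrow> form \<Rightarrow> bool" where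
  "sat F g (Eq x y) = (g x = g y)"
| "sat F g (Neg p) = (\<not> sat F g p)"
| "sat F g (Conj p q) = (sat F g p \<and> sat F g q)"
| "sat F g (Ex x p) = (\<exists>v\<in>pts F. sat F (g(x := v)) p)"
| "sat F g (Box x y p) = ({v \<in> pts F. sat F (g(y := v)) p} \<in> nb F (g x))"

text \<open>Truth of a sentence (independent of the assignment, since it has no free variables).\<close>
definition holds :: "'a nframe \<Rightarrow> form \<Rightarrow> bool" where
  "holds F p \<longleftrightarrow> (\<forall>g. sat F g p)"

definition Th :: "'a nframe \<Rightarrow> form set" where
  "Th F = {p. sentence p \<and> holds F p}"

definition bounded_morphism :: "'a nframe \<Rightarrow> 'b nframe \<Rightarrow> ('a \<Rightarrow> 'b) \<Rightarrow> bool" where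
  "bounded_morphism F F' f \<longleftrightarrow> f ` pts F \<subseteq> pts F' \<and>
     (\<forall>w\<in>pts F. \<forall>U'. U' \<subseteq> pts F' \<longrightarrow>
        ({v \<in> pts F. f v \<in> U'} \<in> nb F w \<longleftrightarrow> U' \<in> nb F' (f w)))"

definition cbox :: "'a nframe \<Rightarrow> 'a set \<Rightarrow> 'a set" where
  "cbox F X = {w \<in> pts F. X \<in> nb F w}"

definition ultrafilter_on :: "'a set \<Rightarrow> 'a set set \<Rightarrow> bool" where
  "ultrafilter_on W u \<longleftrightarrow> u \<subseteq> Pow W \<and> W \<in> u \<and> {} \<notin> u \<and>
     (\<forall>X\<in>u. \<forall>Y\<in>u. X \<inter> Y \<in> u) \<and>
     (\<forall>X\<in>u. \<forall>Y. X \<subseteq> Y \<and> Y \<subseteq> W \<longrightarrow> Y \<in> u) \<and>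
     (\<forall>X. X \<subseteq> W \<longrightarrow> X \<in> u \<or> W - X \<in> u)"

definition Uf :: "'a set \<Rightarrow> 'a set set set" where
  "Uf W = {u. ultrafilter_on W u}"

definition basic :: "'a set \<Rightarrow> 'a set \<Rightarrow> 'a set set set" where
  "basic W a = {u \<in> Uf W. a \<in> u}"

definition closed_uf :: "'a set \<Rightarrow> 'a set set set \<Rightarrow> bool" where
  "closed_uf W K \<longleftrightarrow> (\<exists>S \<subseteq> Pow W. K = Uf W \<inter> (\<Inter>a\<in>S. basic W a))"

definition ue :: "'a nframe \<Rightarrow> 'a set set nframe" where
  "ue F = (Uf (pts F),
     \<lambda>u. {U. U \<subseteq> Uf (pts F) \<and>
            (\<exists>K. closed_uf (pts F) K \<and> K \<subseteq> U \<and>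
                 (\<forall>a. a \<subseteq> pts F \<longrightarrow> K \<subseteq> basic (pts F) a \<longrightarrow> cbox F a \<in> u))})"

end

(*
  Let D be an ultrafilter on finite families of subsets of W = pts F that, for every b, contains
  the families having b as a member, and let G be the omega-fold iterated ultrapower of F along D:
  its points are the classes of W-valued functions of sequences of families that depend on only
  finitely many coordinates, two functions being identified when they agree for D-almost all
  n-th coordinates, ..., for D-almost all 0-th coordinates.  Los's theorem holds for L_=, so G is
  elementarily equivalent to F.  Sending a point to the ultrafilter of the subsets of W that
  almost surely contain it is a bounded morphism onto ue F.  Both directions rest on one kind of
  saturation: a fresh coordinate can be chosen after all earlier ones, and choosing it to list
  finitely many members of an ultrafilter u (or of a family S of standard sets) yields points of
  an internal set that realise u (internal neighbourhoods below every member of S).  Finally G is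
  copied along an injection into 'a set set set.
*)

theory Submission
  imports Defs
begin

lemma finite_fv: "finite (fv p)"
  by (induction p) auto

lemma sat_cong_fv: "(\<forall>z\<in>fv p. g z = g' z) \<Longrightarrow> sat F g p \<longleftrightarrow> sat F g' p"
proof (induction p arbitrary: g g')
  case (Ex x p)
  have "\<And>v. sat F (g(x := v)) p \<longleftrightarrow> sat F (g'(x := v)) p"
    using Ex.prems by (intro Ex.IH) auto
  then show ?case by simp
next
  case (Box x y p)
  have "\<And>v. sat F (g(y := v)) p \<longleftrightarrow> sat F (g'(y := v)) p"
    using Box.prems by (intro Box.IH) auto
  moreover have "g x = g' x" using Box.prems by simp
  ultimately show ?case by simp
next
  case (Conj p q)
  have "sat F g p \<longleftrightarrow> sat F g' p" "sat F g q \<longleftrightarrow> sat F g' q"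
    using Conj.prems by (intro Conj.IH; auto)+
  then show ?case by simp
qed auto

lemma holds_iff_sat: "sentence p \<Longrightarrow> holds F p \<longleftrightarrow> sat F g p"
  unfolding holds_def sentence_def using sat_cong_fv[of p _ g F] by auto

lemma Th_eqI: "(\<And>p. sentence p \<Longrightarrow> holds F p \<longleftrightarrow> holds G p) \<Longrightarrow> Th F = Th G"
  unfolding Th_def by auto

lemma quasi_filter_Int:
  assumes "quasi_filter F" "w \<in> pts F" "X \<in> nb F w" "Y \<in> nb F w"
  shows "X \<inter> Y \<in> nb F w"
proof -
  have "finite {X, Y}" "{X, Y} \<noteq> {}" "{X, Y} \<subseteq> nb F w" using assms(3,4) by auto
  then have "\<Inter>{X, Y} \<in> nb F w" using assms(1,2) unfolding quasi_filter_def by blast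
  then show ?thesis by simp
qed

lemma quasi_filterI:
  assumes "monotonic F"
    and Int: "\<And>w X Y. w \<in> pts F \<Longrightarrow> X \<in> nb F w \<Longrightarrow> Y \<in> nb F w \<Longrightarrow> X \<inter> Y \<in> nb F w"
  shows "quasi_filter F"
  unfolding quasi_filter_def
proof (intro conjI ballI allI impI)
  fix w S assume w: "w \<in> pts F" and S: "finite S \<and> S \<noteq> {} \<and> S \<subseteq> nb F w"
  have "finite S \<Longrightarrow> S \<noteq> {} \<Longrightarrow> S \<subseteq> nb F w \<Longrightarrow> \<Inter>S \<in> nb F w"
    by (induction S rule: finite_ne_induct) (auto intro: Int[OF w])
  then show "\<Inter>S \<in> nb F w" using S by blast
qed (rule assms(1))

lemma bounded_morphism_in_pts: "bounded_morphism F G f \<Longrightarrow> w \<in> pts F \<Longrightarrow> f w \<in> pts G"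
  unfolding bounded_morphism_def by blast

lemma bounded_morphism_nb_iff:
  "bounded_morphism F G f \<Longrightarrow> w \<in> pts F \<Longrightarrow> U \<subseteq> pts G \<Longrightarrow>
    {v \<in> pts F. f v \<in> U} \<in> nb F w \<longleftrightarrow> U \<in> nb G (f w)"
  unfolding bounded_morphism_def by blast

lemma bounded_morphism_comp:
  assumes f: "bounded_morphism F G f" and g: "bounded_morphism G H g"
  shows "bounded_morphism F H (g \<circ> f)"
  unfolding bounded_morphism_def
proof (intro conjI ballI allI impI)
  show "(g \<circ> f) ` pts F \<subseteq> pts H"
    using bounded_morphism_in_pts[OF g] bounded_morphism_in_pts[OF f] by auto
  fix w U assume w: "w \<in> pts F" and U: "U \<subseteq> pts H"
  let ?U = "{v \<in> pts G. g v \<in> U}"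
  have "{v \<in> pts F. (g \<circ> f) v \<in> U} = {v \<in> pts F. f v \<in> ?U}"
    using bounded_morphism_in_pts[OF f] by auto
  moreover have "{v \<in> pts F. f v \<in> ?U} \<in> nb F w \<longleftrightarrow> ?U \<in> nb G (f w)"
    by (rule bounded_morphism_nb_iff[OF f w]) blast
  moreover have "?U \<in> nb G (f w) \<longleftrightarrow> U \<in> nb H (g (f w))"
    by (rule bounded_morphism_nb_iff[OF g bounded_morphism_in_pts[OF f w] U])
  ultimately show "{v \<in> pts F. (g \<circ> f) v \<in> U} \<in> nb F w \<longleftrightarrow> U \<in> nb H ((g \<circ> f) w)"
    by simp
qed

context
  fixes G :: "'a nframe" and H :: "'b nframe" and f :: "'a \<Rightarrow> 'b"
  assumes bm: "bounded_morphism G H f" and bij: "bij_betw f (pts G) (pts H)"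
begin

lemma sat_bij_bounded_morphism:
  "(\<And>z. z \<in> fv p \<Longrightarrow> g z \<in> pts G) \<Longrightarrow> sat G g p \<longleftrightarrow> sat H (f \<circ> g) p"
proof (induction p arbitrary: g)
  case (Eq x y)
  then show ?case using bij by (auto simp: bij_betw_def inj_on_def)
next
  case (Ex x p)
  have "sat G (g(x := v)) p \<longleftrightarrow> sat H ((f \<circ> g)(x := f v)) p" if "v \<in> pts G" for v
  proof -
    have "sat G (g(x := v)) p \<longleftrightarrow> sat H (f \<circ> g(x := v)) p"
      by (rule Ex.IH) (use Ex.prems that in auto)
    then show ?thesis by (simp only: fun_upd_comp)
  qed
  then have "sat G g (Ex x p) \<longleftrightarrow> (\<exists>v\<in>pts G. sat H ((f \<circ> g)(x := f v)) p)"
    by auto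
  also have "\<dots> \<longleftrightarrow> (\<exists>v\<in>f ` pts G. sat H ((f \<circ> g)(x := v)) p)"
    by blast
  also have "\<dots> \<longleftrightarrow> sat H (f \<circ> g) (Ex x p)"
    using bij_betw_imp_surj_on[OF bij] by simp
  finally show ?case .
next
  case (Box x y p)
  let ?U = "{v \<in> pts H. sat H ((f \<circ> g)(y := v)) p}"
  have "sat G (g(y := v)) p \<longleftrightarrow> sat H ((f \<circ> g)(y := f v)) p" if "v \<in> pts G" for v
  proof -
    have "sat G (g(y := v)) p \<longleftrightarrow> sat H (f \<circ> g(y := v)) p"
      by (rule Box.IH) (use Box.prems that in auto)
    then show ?thesis by (simp only: fun_upd_comp)
  qed
  then have eq: "{v \<in> pts G. sat G (g(y := v)) p} = {v \<in> pts G. f v \<in> ?U}"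
    using bij_betw_apply[OF bij] by auto
  have "g x \<in> pts G" using Box.prems by simp
  from bounded_morphism_nb_iff[OF bm this, of ?U] show ?case
    by (simp only: sat.simps eq comp_def mem_Collect_eq Collect_subset simp_thms)
qed auto

lemma Th_bij_bounded_morphism: "Th G = Th H"
proof (rule Th_eqI)
  fix p :: form and g :: "nat \<Rightarrow> 'a" assume p: "sentence p"
  then have "sat G g p \<longleftrightarrow> sat H (f \<circ> g) p"
    by (intro sat_bij_bounded_morphism) (simp add: sentence_def)
  then show "holds G p \<longleftrightarrow> holds H p"
    using holds_iff_sat[OF p, of G g] holds_iff_sat[OF p, of H "f \<circ> g"] by simp
qed

lemma image_mem_nb_iff:
  assumes "w \<in> pts G" "X \<subseteq> pts G"
  shows "f ` X \<in> nb H (f w) \<longleftrightarrow> X \<in> nb G w"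
proof -
  have "f ` X \<subseteq> pts H" using assms(2) bij by (auto simp: bij_betw_def)
  moreover have "{v \<in> pts G. f v \<in> f ` X} = X"
    using assms(2) bij by (auto simp: bij_betw_def inj_on_def)
  ultimately show ?thesis using bounded_morphism_nb_iff[OF bm assms(1)] by metis
qed

lemma monotonic_bij_bounded_morphism:
  assumes "nframe G" "monotonic H"
  shows "monotonic G"
  unfolding monotonic_def
proof (intro conjI ballI allI impI)
  fix w X Y assume w: "w \<in> pts G" and XY: "X \<in> nb G w \<and> X \<subseteq> Y \<and> Y \<subseteq> pts G"
  have "X \<subseteq> pts G" using assms(1) w XY by (auto simp: nframe_def)
  then have "f ` X \<in> nb H (f w)" using image_mem_nb_iff w XY by blast
  moreover have "f w \<in> pts H" "f ` Y \<subseteq> pts H" using w XY bij by (auto simp: bij_betw_def)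
  moreover have "f ` X \<subseteq> f ` Y" using XY by blast
  ultimately have "f ` Y \<in> nb H (f w)"
    using assms(2) unfolding monotonic_def by blast
  then show "Y \<in> nb G w" using image_mem_nb_iff w XY by blast
qed (use assms in \<open>simp add: monotonic_def\<close>)

lemma quasi_filter_bij_bounded_morphism:
  assumes "nframe G" "quasi_filter H"
  shows "quasi_filter G"
  unfolding quasi_filter_def
proof (intro conjI ballI allI impI)
  show "monotonic G"
    using assms monotonic_bij_bounded_morphism by (simp add: quasi_filter_def)
  fix w S assume w: "w \<in> pts G" and S: "finite S \<and> S \<noteq> {} \<and> S \<subseteq> nb G w"
  have sub: "X \<subseteq> pts G" if "X \<in> S" for X using assms(1) w S that by (auto simp: nframe_def)
  have "image f ` S \<subseteq> nb H (f w)" using image_mem_nb_iff w sub S by blast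
  moreover have "f w \<in> pts H" using w bij by (auto simp: bij_betw_def)
  ultimately have "\<Inter>(image f ` S) \<in> nb H (f w)"
    using assms(2) S unfolding quasi_filter_def by blast
  moreover obtain X0 where "X0 \<in> S" using S by blast
  then have "\<Inter>(image f ` S) = f ` \<Inter>S"
    using image_INT[of f "pts G" S "\<lambda>X. X" X0] sub bij by (simp add: bij_betw_def)
  moreover have "\<Inter>S \<subseteq> pts G" using S sub by blast
  ultimately show "\<Inter>S \<in> nb G w" using image_mem_nb_iff w by simp
qed

end

definition image_frame :: "('a \<Rightarrow> 'b) \<Rightarrow> 'a nframe \<Rightarrow> 'b nframe" where
  "image_frame \<iota> G = (\<iota> ` pts G, \<lambda>p. image \<iota> ` nb G (inv_into (pts G) \<iota> p))"

lemma pts_image_frame: "pts (image_frame \<iota> G) = \<iota> ` pts G"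
  by (simp add: image_frame_def pts_def)

lemma nb_image_frame: "inj_on \<iota> (pts G) \<Longrightarrow> w \<in> pts G \<Longrightarrow> nb (image_frame \<iota> G) (\<iota> w) = image \<iota> ` nb G w"
  by (simp add: image_frame_def nb_def)

lemma nframe_image_frame:
  assumes "nframe G" "inj_on \<iota> (pts G)"
  shows "nframe (image_frame \<iota> G)"
  unfolding nframe_def pts_image_frame
proof
  fix p assume "p \<in> \<iota> ` pts G"
  then obtain w where "w \<in> pts G" "p = \<iota> w" by blast
  then show "nb (image_frame \<iota> G) p \<subseteq> Pow (\<iota> ` pts G)"
    using assms by (auto simp: nframe_def nb_image_frame)
qed

lemma bij_betw_inv_into_image_frame:
  "inj_on \<iota> (pts G) \<Longrightarrow> bij_betw (inv_into (pts G) \<iota>) (pts (image_frame \<iota> G)) (pts G)"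
  by (simp add: pts_image_frame bij_betw_inv_into inj_on_imp_bij_betw)

lemma bounded_morphism_inv_into_image_frame:
  assumes G: "nframe G" and inj: "inj_on \<iota> (pts G)"
  shows "bounded_morphism (image_frame \<iota> G) G (inv_into (pts G) \<iota>)"
  unfolding bounded_morphism_def
proof (intro conjI ballI allI impI)
  show "inv_into (pts G) \<iota> ` pts (image_frame \<iota> G) \<subseteq> pts G"
    by (auto simp: pts_image_frame inv_into_into)
  fix p U assume p: "p \<in> pts (image_frame \<iota> G)" and U: "U \<subseteq> pts G"
  then obtain w where w: "w \<in> pts G" "p = \<iota> w" by (auto simp: pts_image_frame)
  have "{v \<in> pts (image_frame \<iota> G). inv_into (pts G) \<iota> v \<in> U} = \<iota> ` U"
    using U inj by (auto simp: pts_image_frame)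
  moreover have "\<iota> ` U \<in> image \<iota> ` nb G w \<longleftrightarrow> U \<in> nb G w"
  proof
    assume "\<iota> ` U \<in> image \<iota> ` nb G w"
    then obtain X where "X \<in> nb G w" "\<iota> ` U = \<iota> ` X" by blast
    moreover have "X \<subseteq> pts G" using G w \<open>X \<in> nb G w\<close> by (auto simp: nframe_def)
    ultimately show "U \<in> nb G w" using inj_on_image_eq_iff[OF inj U] by simp
  qed blast
  ultimately show "{v \<in> pts (image_frame \<iota> G). inv_into (pts G) \<iota> v \<in> U} \<in> nb (image_frame \<iota> G) p
      \<longleftrightarrow> U \<in> nb G (inv_into (pts G) \<iota> p)"
    using w inj by (simp add: nb_image_frame)
qed

definition ue_cover :: "'a nframe \<Rightarrow> 'b nframe \<Rightarrow> bool" where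
  "ue_cover F G \<longleftrightarrow> monotonic G \<and> Th G = Th F \<and> (quasi_filter F \<longrightarrow> quasi_filter G) \<and>
     (\<exists>f. bounded_morphism G (ue F) f \<and> f ` pts G = pts (ue F))"

lemma ue_cover_image_frame:
  assumes cover: "ue_cover F G" and inj: "inj_on \<iota> (pts G)"
  shows "ue_cover F (image_frame \<iota> G)"
proof -
  let ?j = "inv_into (pts G) \<iota>"
  have G: "nframe G" using cover by (simp add: ue_cover_def monotonic_def)
  have G': "nframe (image_frame \<iota> G)" by (rule nframe_image_frame[OF G inj])
  note j = bounded_morphism_inv_into_image_frame[OF G inj] bij_betw_inv_into_image_frame[OF inj]
  obtain f where f: "bounded_morphism G (ue F) f" "f ` pts G = pts (ue F)"
    using cover by (auto simp: ue_cover_def)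
  have "bounded_morphism (image_frame \<iota> G) (ue F) (f \<circ> ?j)"
    by (rule bounded_morphism_comp[OF j(1) f(1)])
  moreover have "(f \<circ> ?j) ` pts (image_frame \<iota> G) = pts (ue F)"
    using f(2) bij_betw_imp_surj_on[OF j(2)] by (simp only: image_comp[symmetric])
  ultimately have "\<exists>f'. bounded_morphism (image_frame \<iota> G) (ue F) f' \<and>
      f' ` pts (image_frame \<iota> G) = pts (ue F)" by blast
  then show ?thesis
    using cover monotonic_bij_bounded_morphism[OF j G'] quasi_filter_bij_bounded_morphism[OF j G']
      Th_bij_bounded_morphism[OF j]
    by (simp add: ue_cover_def)
qed

lemma ue_cover_empty: "monotonic F \<Longrightarrow> pts F = {} \<Longrightarrow> ue_cover F F"
  by (auto simp: ue_cover_def bounded_morphism_def pts_def ue_def Uf_def ultrafilter_on_def)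

section \<open>Ultrafilters\<close>

lemma ultrafilter_on_Inter:
  assumes u: "ultrafilter_on W u" and s: "finite s" "s \<subseteq> u"
  shows "\<Inter>s \<inter> W \<in> u"
  using s
proof (induction s rule: finite_induct)
  case empty
  then show ?case using u by (simp add: ultrafilter_on_def)
next
  case (insert a s)
  then have "a \<in> u" "\<Inter>s \<inter> W \<in> u" by auto
  then have "a \<inter> (\<Inter>s \<inter> W) \<in> u" using u unfolding ultrafilter_on_def by blast
  then show ?case by (simp add: Int_assoc)
qed

lemma ultrafilter_on_compl: "ultrafilter_on W u \<Longrightarrow> b \<in> u \<Longrightarrow> W - b \<notin> u"
  unfolding ultrafilter_on_def by (metis Diff_disjoint)

lemma ultrafilter_on_subset_eq:
  assumes u: "ultrafilter_on W u" and u': "ultrafilter_on W u'" and sub: "u \<subseteq> u'"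
  shows "u = u'"
proof (rule antisym[OF sub], rule subsetI)
  fix b assume b: "b \<in> u'"
  then have "b \<subseteq> W" using u' by (auto simp: ultrafilter_on_def)
  then have "b \<in> u \<or> W - b \<in> u" using u by (simp add: ultrafilter_on_def)
  moreover have "W - b \<notin> u" using ultrafilter_on_compl[OF u' b] sub by blast
  ultimately show "b \<in> u" by blast
qed

lemma pts_ue: "pts (ue F) = Uf (pts F)"
  by (simp add: ue_def pts_def)

lemma nb_ue: "nb (ue F) u = {U. U \<subseteq> Uf (pts F) \<and>
    (\<exists>K. closed_uf (pts F) K \<and> K \<subseteq> U \<and>
      (\<forall>a. a \<subseteq> pts F \<longrightarrow> K \<subseteq> basic (pts F) a \<longrightarrow> cbox F a \<in> u))}"
  by (simp add: ue_def nb_def)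

locale ultrafilter =
  fixes D :: "'i filter"
  assumes proper: "D \<noteq> bot"
    and ultra: "eventually P D \<or> eventually (\<lambda>x. \<not> P x) D"
begin

lemma eventually_not_iff: "eventually (\<lambda>x. \<not> P x) D \<longleftrightarrow> \<not> eventually P D"
proof
  assume notP: "eventually (\<lambda>x. \<not> P x) D"
  show "\<not> eventually P D"
  proof
    assume "eventually P D"
    with notP have "eventually (\<lambda>x. False) D" by eventually_elim simp
    then show False using proper by simp
  qed
qed (use ultra in blast)

end

lemma ultrafilter_if_maximal:
  assumes "D \<noteq> bot" and max: "\<And>G. G \<noteq> bot \<Longrightarrow> G \<le> D \<Longrightarrow> G = D"
  shows "ultrafilter D"
proof
  fix P
  show "eventually P D \<or> eventually (\<lambda>x. \<not> P x) D"
  proof (rule disjCI)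
    let ?G = "inf D (principal {x. P x})"
    assume "\<not> eventually (\<lambda>x. \<not> P x) D"
    then have "?G \<noteq> bot" by (simp add: trivial_limit_def eventually_inf_principal)
    then have "?G = D" by (rule max) (rule inf_le1)
    moreover have "eventually P ?G" by (simp add: eventually_inf_principal)
    ultimately show "eventually P D" by simp
  qed
qed (rule assms(1))

lemma ex_maximal_filter_le:
  fixes F :: "'i filter"
  assumes "F \<noteq> bot"
  shows "\<exists>D \<le> F. D \<noteq> bot \<and> (\<forall>G. G \<noteq> bot \<longrightarrow> G \<le> D \<longrightarrow> G = D)"
proof -
  define ev :: "'i filter \<Rightarrow> ('i \<Rightarrow> bool) set" where "ev G = {P. eventually P G}" for G
  have ev_subset_iff: "ev G \<subseteq> ev G' \<longleftrightarrow> G' \<le> G" for G G'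
    by (auto simp: ev_def le_filter_def)
  let ?A = "ev ` {G. G \<noteq> bot \<and> G \<le> F}"
  have "\<exists>M\<in>?A. \<forall>X\<in>?A. M \<subseteq> X \<longrightarrow> X = M"
  proof (rule Zorn_Lemma2, intro ballI)
    fix C assume C: "C \<in> chains ?A"
    then obtain B where B: "B \<subseteq> {G. G \<noteq> bot \<and> G \<le> F}" and CB: "C = ev ` B"
      by (auto simp: chains_def subset_image_iff)
    show "\<exists>U\<in>?A. \<forall>X\<in>C. X \<subseteq> U"
    proof (cases "B = {}")
      case True
      then show ?thesis using assms CB by blast
    next
      case False
      have "\<exists>H\<in>B. H \<le> inf G G'" if "G \<in> B" "G' \<in> B" for G G'
      proof -
        have "ev G \<subseteq> ev G' \<or> ev G' \<subseteq> ev G" using chainsD[OF C] that CB by blast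
        then have "G' \<le> G \<or> G \<le> G'" using ev_subset_iff by blast
        then show ?thesis using that by (metis le_inf_iff order_refl)
      qed
      then have ev_Inf: "eventually P (Inf B) \<longleftrightarrow> (\<exists>G\<in>B. eventually P G)" for P
        by (rule eventually_Inf_base[OF False])
      have "Inf B \<noteq> bot" using ev_Inf[of "\<lambda>_. False"] B by (auto simp: trivial_limit_def)
      moreover have "Inf B \<le> F" using False B by (auto intro: Inf_lower2)
      moreover have "\<forall>X\<in>C. X \<subseteq> ev (Inf B)" using CB ev_Inf by (auto simp: ev_def)
      ultimately show ?thesis by blast
    qed
  qed
  then obtain D where D: "D \<noteq> bot" "D \<le> F" and maxD: "\<forall>X\<in>?A. ev D \<subseteq> X \<longrightarrow> X = ev D"
    by blast
  have "G = D" if "G \<noteq> bot" "G \<le> D" for G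
  proof -
    have "G \<le> F" using that(2) D(2) by (rule order_trans)
    then have "ev G = ev D" using maxD that ev_subset_iff by blast
    then show "G = D" using ev_subset_iff by (metis antisym order_refl)
  qed
  then show ?thesis using D by blast
qed

lemma ex_ultrafilter_le: "F \<noteq> bot \<Longrightarrow> \<exists>D \<le> F. ultrafilter D"
  using ex_maximal_filter_le ultrafilter_if_maximal by metis

section \<open>The iterated ultrapower quantifier\<close>

text \<open>The coordinates from \<open>n\<close> on are left \<open>undefined\<close>, which is harmless
  when \<open>P\<close> depends only on the coordinates below \<open>n\<close>.\<close>

primrec iter_eventually :: "'i filter \<Rightarrow> nat \<Rightarrow> ((nat \<Rightarrow> 'i) \<Rightarrow> bool) \<Rightarrow> bool" where
  "iter_eventually D 0 P = P (\<lambda>_. undefined)"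
| "iter_eventually D (Suc n) P = eventually (\<lambda>j. iter_eventually D n (\<lambda>\<sigma>. P (\<sigma>(n := j)))) D"

definition depends_below :: "nat \<Rightarrow> ((nat \<Rightarrow> 'i) \<Rightarrow> 'x) \<Rightarrow> bool" where
  "depends_below n X \<longleftrightarrow> (\<forall>\<sigma> \<sigma>'. (\<forall>k<n. \<sigma> k = \<sigma>' k) \<longrightarrow> X \<sigma> = X \<sigma>')"

definition finitary :: "((nat \<Rightarrow> 'i) \<Rightarrow> 'x) \<Rightarrow> bool" where
  "finitary X \<longleftrightarrow> (\<exists>n. depends_below n X)"

lemma depends_below_mono: "depends_below n X \<Longrightarrow> n \<le> m \<Longrightarrow> depends_below m X"
  unfolding depends_below_def by auto

lemma depends_below_comp: "depends_below n X \<Longrightarrow> depends_below n (\<lambda>\<sigma>. g (X \<sigma>))"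
  unfolding depends_below_def by metis

lemma depends_below_comp2:
  "depends_below n X \<Longrightarrow> depends_below n Y \<Longrightarrow> depends_below n (\<lambda>\<sigma>. g (X \<sigma>) (Y \<sigma>))"
  unfolding depends_below_def by metis

lemma depends_below_const: "depends_below n (\<lambda>\<sigma>. c)"
  unfolding depends_below_def by simp

lemma depends_below_fun_upd: "depends_below n X \<Longrightarrow> n \<le> m \<Longrightarrow> X (\<sigma>(m := j)) = X \<sigma>"
  unfolding depends_below_def by auto

lemma finitary_comp: "finitary X \<Longrightarrow> finitary (\<lambda>\<sigma>. g (X \<sigma>))"
  unfolding finitary_def using depends_below_comp by blast

lemma finitary_const: "finitary (\<lambda>\<sigma>. c)"
  unfolding finitary_def depends_below_def by simp

lemma finitary_common_bound:
  assumes "finite Z" "\<And>z. z \<in> Z \<Longrightarrow> finitary (H z)"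
  shows "\<exists>n. \<forall>z\<in>Z. depends_below n (H z)"
  using assms
proof (induction Z rule: finite_induct)
  case (insert z Z)
  from insert obtain n where "\<forall>z\<in>Z. depends_below n (H z)" by blast
  moreover from insert.prems obtain m where "depends_below m (H z)" by (auto simp: finitary_def)
  ultimately have "\<forall>z'\<in>insert z Z. depends_below (max n m) (H z')"
    by (auto intro: depends_below_mono)
  then show ?case by blast
qed simp

lemma finitary_comp2:
  assumes "finitary X" "finitary Y"
  shows "finitary (\<lambda>\<sigma>. g (X \<sigma>) (Y \<sigma>))"
proof -
  obtain n m where "depends_below n X" "depends_below m Y" using assms by (auto simp: finitary_def)
  then have "depends_below (max n m) X" "depends_below (max n m) Y"
    by (auto intro: depends_below_mono)
  then show ?thesis unfolding finitary_def by (blast intro: depends_below_comp2)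
qed

lemma finitary_if_determined:
  assumes "finite Z" "\<And>z. z \<in> Z \<Longrightarrow> finitary (H z)"
    and "\<And>\<sigma> \<sigma>'. \<forall>z\<in>Z. H z \<sigma> = H z \<sigma>' \<Longrightarrow> X \<sigma> = X \<sigma>'"
  shows "finitary X"
proof -
  obtain n where "\<forall>z\<in>Z. depends_below n (H z)" using finitary_common_bound assms(1,2) by blast
  then have "depends_below n X" using assms(3) unfolding depends_below_def by metis
  then show ?thesis unfolding finitary_def by blast
qed

context ultrafilter
begin

lemma iter_eventually_conj:
  "iter_eventually D n (\<lambda>\<sigma>. P \<sigma> \<and> Q \<sigma>) \<longleftrightarrow> iter_eventually D n P \<and> iter_eventually D n Q"
  by (induction n arbitrary: P Q) (simp_all add: eventually_conj_iff)

lemma iter_eventually_not: "iter_eventually D n (\<lambda>\<sigma>. \<not> P \<sigma>) \<longleftrightarrow> \<not> iter_eventually D n P"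
  by (induction n arbitrary: P) (simp_all add: eventually_not_iff)

lemma iter_eventually_const: "iter_eventually D n (\<lambda>\<sigma>. c) \<longleftrightarrow> c"
  by (induction n) (simp_all add: proper)

lemma iter_eventually_mono:
  "iter_eventually D n P \<Longrightarrow> (\<And>\<sigma>. P \<sigma> \<Longrightarrow> Q \<sigma>) \<Longrightarrow> iter_eventually D n Q"
proof (induction n arbitrary: P Q)
  case (Suc n)
  show ?case using Suc.prems(1) unfolding iter_eventually.simps
  proof (rule eventually_mono)
    fix j assume "iter_eventually D n (\<lambda>\<sigma>. P (\<sigma>(n := j)))"
    then show "iter_eventually D n (\<lambda>\<sigma>. Q (\<sigma>(n := j)))"
      by (rule Suc.IH) (rule Suc.prems(2))
  qed
qed simp

lemma iter_eventually_add:
  "depends_below n P \<Longrightarrow> iter_eventually D (n + k) P \<longleftrightarrow> iter_eventually D n P"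
proof (induction k)
  case (Suc k)
  have "P (\<sigma>(n + k := j)) = P \<sigma>" for \<sigma> j
    using Suc.prems by (rule depends_below_fun_upd) simp
  then show ?case using Suc by (simp add: proper)
qed simp

lemma iter_eventually_indep:
  "depends_below n P \<Longrightarrow> depends_below m P \<Longrightarrow> iter_eventually D n P \<longleftrightarrow> iter_eventually D m P"
  using iter_eventually_add[of n P "m - n"] iter_eventually_add[of m P "n - m"]
  by (cases "n \<le> m") simp_all

lemma iter_eventually_all_below:
  "eventually (\<lambda>j. j \<in> I) D \<Longrightarrow> iter_eventually D n (\<lambda>\<sigma>. \<forall>k<n. \<sigma> k \<in> I)"
proof (induction n)
  case (Suc n)
  show ?case unfolding iter_eventually.simps
  proof (rule eventually_mono[OF Suc.prems])
    fix j assume "j \<in> I"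
    then show "iter_eventually D n (\<lambda>\<sigma>. \<forall>k<Suc n. (\<sigma>(n := j)) k \<in> I)"
      by (intro iter_eventually_mono[OF Suc.IH[OF Suc.prems]]) (auto simp: less_Suc_eq)
  qed
qed simp

text \<open>Truth in the \<open>\<omega>\<close>-fold iterated ultrapower; \<open>AE P\<close> is false for non-finitary \<open>P\<close>.\<close>

definition AE :: "((nat \<Rightarrow> 'i) \<Rightarrow> bool) \<Rightarrow> bool" where
  "AE P \<longleftrightarrow> (\<exists>n. depends_below n P \<and> iter_eventually D n P)"

lemma AE_iff: "depends_below n P \<Longrightarrow> AE P \<longleftrightarrow> iter_eventually D n P"
  unfolding AE_def using iter_eventually_indep by blast

lemma AE_finitary: "AE P \<Longrightarrow> finitary P"
  unfolding AE_def finitary_def by blast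

lemma AE_const: "AE (\<lambda>\<sigma>. c) \<longleftrightarrow> c"
  using AE_iff[OF depends_below_const[of 0]] by (simp add: iter_eventually_const)

lemma AE_conj:
  assumes "finitary P" "finitary Q"
  shows "AE (\<lambda>\<sigma>. P \<sigma> \<and> Q \<sigma>) \<longleftrightarrow> AE P \<and> AE Q"
proof -
  obtain n m where "depends_below n P" "depends_below m Q" using assms by (auto simp: finitary_def)
  then have "depends_below (max n m) P" "depends_below (max n m) Q"
    by (auto intro: depends_below_mono)
  moreover from this have "depends_below (max n m) (\<lambda>\<sigma>. P \<sigma> \<and> Q \<sigma>)"
    by (rule depends_below_comp2)
  ultimately show ?thesis by (simp add: AE_iff iter_eventually_conj)
qed

lemma AE_not:
  assumes "finitary P"
  shows "AE (\<lambda>\<sigma>. \<not> P \<sigma>) \<longleftrightarrow> \<not> AE P"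
proof -
  obtain n where n: "depends_below n P" using assms by (auto simp: finitary_def)
  then have "depends_below n (\<lambda>\<sigma>. \<not> P \<sigma>)" by (rule depends_below_comp)
  then show ?thesis using n by (simp add: AE_iff iter_eventually_not)
qed

lemma AE_disj:
  assumes P: "finitary P" and Q: "finitary Q"
  shows "AE (\<lambda>\<sigma>. P \<sigma> \<or> Q \<sigma>) \<longleftrightarrow> AE P \<or> AE Q"
proof -
  have nP: "finitary (\<lambda>\<sigma>. \<not> P \<sigma>)" and nQ: "finitary (\<lambda>\<sigma>. \<not> Q \<sigma>)"
    using P Q by (simp_all add: finitary_comp)
  have "AE (\<lambda>\<sigma>. P \<sigma> \<or> Q \<sigma>) \<longleftrightarrow> \<not> AE (\<lambda>\<sigma>. \<not> P \<sigma> \<and> \<not> Q \<sigma>)"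
    using AE_not[OF finitary_comp2[OF nP nQ, of "(\<and>)"]] by simp
  also have "\<dots> \<longleftrightarrow> AE P \<or> AE Q"
    using AE_conj[OF nP nQ] AE_not[OF P] AE_not[OF Q] by simp
  finally show ?thesis .
qed

lemma AE_mono:
  assumes "AE P" "\<And>\<sigma>. P \<sigma> \<Longrightarrow> Q \<sigma>" "finitary Q"
  shows "AE Q"
proof -
  obtain n m where "depends_below n P" "iter_eventually D n P" "depends_below m Q"
    using assms by (auto simp: AE_def finitary_def)
  then have "depends_below (max n m) P" "iter_eventually D (max n m) P" "depends_below (max n m) Q"
    using iter_eventually_indep depends_below_mono by (metis max.cobounded1 max.cobounded2)+
  then show ?thesis using assms(2) by (auto simp: AE_iff intro: iter_eventually_mono)
qed

lemma AE_mp: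
  assumes "AE P" "AE Q" "\<And>\<sigma>. P \<sigma> \<Longrightarrow> Q \<sigma> \<Longrightarrow> R \<sigma>" "finitary R"
  shows "AE R"
proof -
  have "AE (\<lambda>\<sigma>. P \<sigma> \<and> Q \<sigma>)" using AE_conj AE_finitary assms(1,2) by blast
  then show ?thesis using AE_mono assms(3,4) by blast
qed

lemma AE_bex_finite:
  assumes "finite X" "\<And>x. x \<in> X \<Longrightarrow> finitary (P x)" "AE (\<lambda>\<sigma>. \<exists>x\<in>X. P x \<sigma>)"
  shows "\<exists>x\<in>X. AE (P x)"
  using assms
proof (induction X rule: finite_induct)
  case empty
  then show ?case by (simp add: AE_const)
next
  case (insert x X)
  have "finitary (\<lambda>\<sigma>. \<exists>y\<in>X. P y \<sigma>)"
  proof (rule finitary_if_determined[of X P])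
    fix \<sigma> \<sigma>' assume "\<forall>y\<in>X. P y \<sigma> = P y \<sigma>'"
    then show "(\<exists>y\<in>X. P y \<sigma>) = (\<exists>y\<in>X. P y \<sigma>')" by blast
  qed (use insert.hyps insert.prems in auto)
  then have "AE (P x) \<or> AE (\<lambda>\<sigma>. \<exists>y\<in>X. P y \<sigma>)"
    using insert AE_disj[of "P x" "\<lambda>\<sigma>. \<exists>y\<in>X. P y \<sigma>"] by simp
  then show ?case using insert by blast
qed

text \<open>This is what the iteration is for: the coordinate \<open>\<sigma> m\<close> is quantified outside all
  earlier ones, so it may be chosen after everything that depends only on them (a quantifier
  swap that a single ultrapower does not allow).\<close>

lemma AE_fresh_coordinate:
  assumes R: "depends_below m R" and ev: "eventually (\<lambda>j. AE (\<lambda>\<sigma>. R \<sigma> j)) D"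
  shows "AE (\<lambda>\<sigma>. R \<sigma> (\<sigma> m))"
proof -
  have Rj: "depends_below m (\<lambda>\<sigma>. R \<sigma> j)" for j
    using R by (rule depends_below_comp)
  have "depends_below (Suc m) (\<lambda>\<sigma>. R \<sigma> (\<sigma> m))"
    using R unfolding depends_below_def by (metis lessI less_SucI)
  moreover have "R (\<sigma>(m := j)) = R \<sigma>" for \<sigma> j
    using R by (rule depends_below_fun_upd) simp
  ultimately show ?thesis
    using ev by (simp add: AE_iff[OF Rj] AE_iff)
qed

end

definition list_code :: "('b \<times> nat \<Rightarrow> 'b) \<Rightarrow> 'b set list \<Rightarrow> 'b \<Rightarrow> 'b set" where
  "list_code tag l x = insert (tag (x, 0)) {tag (b, Suc k) | k b. k < length l \<and> b \<in> l ! k}"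

text \<open>Nonempty entries are needed to read the length of \<open>l\<close> off its code.\<close>

lemma list_code_inj:
  assumes tag: "inj tag" and ne: "{} \<notin> set l" "{} \<notin> set l'"
    and eq: "list_code tag l x = list_code tag l' x'"
  shows "l = l' \<and> x = x'"
proof -
  have mem0: "tag (y, 0) \<in> list_code tag l x \<longleftrightarrow> y = x" for y l x
    using tag by (auto simp: list_code_def inj_def)
  have memS: "tag (b, Suc k) \<in> list_code tag l x \<longleftrightarrow> k < length l \<and> b \<in> l ! k" for b k l x
    using tag by (auto simp: list_code_def inj_def)
  have "x = x'" using mem0[of x l x] mem0[of x l' x'] eq by simp
  moreover have len: "k < length l \<longleftrightarrow> k < length l'" for k
    using memS[of _ k l x] memS[of _ k l' x'] eq ne by (metis all_not_in_conv nth_mem)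
  then have "length l = length l'" by (meson linorder_neqE_nat order.irrefl)
  moreover have "l ! k = l' ! k" if "k < length l" for k
    using memS[of _ k l x] memS[of _ k l' x'] eq that len by blast
  ultimately show ?thesis by (simp add: nth_equalityI)
qed

lemma ex_inj_prod_nat:
  includes cardinal_syntax
  assumes "infinite (UNIV :: 'b set)"
  shows "\<exists>tag :: 'b \<times> nat \<Rightarrow> 'b. inj tag"
proof -
  have "|UNIV :: nat set| \<le>o |UNIV :: 'b set|"
    using assms infinite_iff_card_of_nat by blast
  then have "|(UNIV :: 'b set) \<times> (UNIV :: nat set)| =o |UNIV :: 'b set|"
    using assms card_of_Times_infinite by blast
  then have "|UNIV :: ('b \<times> nat) set| \<le>o |UNIV :: 'b set|"
    using ordIso_iff_ordLeq by auto
  then show ?thesis using card_of_ordLeq[of "UNIV :: ('b \<times> nat) set" "UNIV :: 'b set"] by blast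
qed

section \<open>The iterated ultrapower of a frame\<close>

type_synonym 'a up_fun = "(nat \<Rightarrow> 'a set set) \<Rightarrow> 'a"

locale iterated_ultrapower = ultrafilter D for D :: "'a set set filter" +
  fixes F :: "'a nframe"
  assumes monotonic: "monotonic F"
    and nonempty: "pts F \<noteq> {}"
    and le_finite_sets: "D \<le> finite_sets_at_top"
begin

abbreviation W :: "'a set" where "W \<equiv> pts F"

lemma eventually_finite_mem: "eventually (\<lambda>j. finite j \<and> b \<in> j) D"
  by (rule filter_leD[OF le_finite_sets])
    (auto simp: eventually_finite_subsets_at_top intro!: exI[of _ "{b}"])

lemma nb_subset: "w \<in> W \<Longrightarrow> X \<in> nb F w \<Longrightarrow> X \<subseteq> W"
  using monotonic by (auto simp: monotonic_def nframe_def)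

lemma nb_mono: "w \<in> W \<Longrightarrow> X \<in> nb F w \<Longrightarrow> X \<subseteq> Y \<Longrightarrow> Y \<subseteq> W \<Longrightarrow> Y \<in> nb F w"
  using monotonic unfolding monotonic_def by blast

definition elts :: "'a up_fun set" where
  "elts = {h. finitary h \<and> (\<forall>\<sigma>. h \<sigma> \<in> W)}"

definition aeq :: "('a up_fun \<times> 'a up_fun) set" where
  "aeq = {(h, h'). h \<in> elts \<and> h' \<in> elts \<and> AE (\<lambda>\<sigma>. h \<sigma> = h' \<sigma>)}"

definition cls :: "'a up_fun \<Rightarrow> 'a up_fun set" where
  "cls h = aeq `` {h}"

definition upts :: "'a up_fun set set" where
  "upts = elts // aeq"

definition rep :: "'a up_fun set \<Rightarrow> 'a up_fun" where
  "rep c = (SOME h. h \<in> c)"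

definition internal :: "((nat \<Rightarrow> 'a set set) \<Rightarrow> 'a set) \<Rightarrow> 'a up_fun set set" where
  "internal E = {c \<in> upts. AE (\<lambda>\<sigma>. rep c \<sigma> \<in> E \<sigma>)}"

definition unb :: "'a up_fun set \<Rightarrow> 'a up_fun set set set" where
  "unb c = {X. X \<subseteq> upts \<and> (\<exists>E. finitary E \<and> AE (\<lambda>\<sigma>. E \<sigma> \<in> nb F (rep c \<sigma>)) \<and> internal E \<subseteq> X)}"

definition UP :: "'a up_fun set nframe" where
  "UP = (upts, unb)"

definition std_uf :: "'a up_fun set \<Rightarrow> 'a set set" where
  "std_uf c = {b. b \<subseteq> W \<and> AE (\<lambda>\<sigma>. rep c \<sigma> \<in> b)}"

lemma pts_UP: "pts UP = upts" and nb_UP: "nb UP = unb"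
  by (simp_all add: UP_def pts_def nb_def)

lemma elts_finitary: "h \<in> elts \<Longrightarrow> finitary h"
  by (simp add: elts_def)

lemma elts_in_W: "h \<in> elts \<Longrightarrow> h \<sigma> \<in> W"
  by (simp add: elts_def)

lemma const_in_elts: "x \<in> W \<Longrightarrow> (\<lambda>\<sigma>. x) \<in> elts"
  by (simp add: elts_def finitary_const)

lemma finitary_app: "h \<in> elts \<Longrightarrow> finitary Q \<Longrightarrow> finitary (\<lambda>\<sigma>. Q \<sigma> (h \<sigma>))"
  by (rule finitary_comp2[of Q h "\<lambda>q x. q x"]) (simp_all add: elts_finitary)

lemma finitary_mem: "h \<in> elts \<Longrightarrow> finitary E \<Longrightarrow> finitary (\<lambda>\<sigma>. h \<sigma> \<in> E \<sigma>)"
  by (rule finitary_comp2[of h E "(\<in>)"]) (simp_all add: elts_finitary)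

lemma finitary_eq: "h \<in> elts \<Longrightarrow> h' \<in> elts \<Longrightarrow> finitary (\<lambda>\<sigma>. h \<sigma> = h' \<sigma>)"
  by (rule finitary_comp2) (simp_all add: elts_finitary)

lemma equiv_aeq: "equiv elts aeq"
proof (rule equivI)
  show "aeq \<subseteq> elts \<times> elts" by (auto simp: aeq_def)
  show "refl_on elts aeq" by (auto simp: refl_on_def aeq_def AE_const)
  show "sym aeq"
    by (auto simp: sym_def aeq_def intro: AE_mono finitary_eq)
  show "trans aeq"
    unfolding trans_def aeq_def by (auto intro: AE_mp finitary_eq)
qed

lemma cls_eq_iff: "h \<in> elts \<Longrightarrow> h' \<in> elts \<Longrightarrow> cls h = cls h' \<longleftrightarrow> AE (\<lambda>\<sigma>. h \<sigma> = h' \<sigma>)"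
  unfolding cls_def using eq_equiv_class_iff[OF equiv_aeq] by (simp add: aeq_def)

lemma cls_in_upts: "h \<in> elts \<Longrightarrow> cls h \<in> upts"
  unfolding cls_def upts_def by (rule quotientI)

lemma upts_cases:
  assumes "c \<in> upts"
  obtains h where "h \<in> elts" "c = cls h"
  using assms unfolding upts_def cls_def by (auto elim: quotientE)

lemma rep_in_elts: "c \<in> upts \<Longrightarrow> rep c \<in> elts"
  and cls_rep: "c \<in> upts \<Longrightarrow> cls (rep c) = c"
proof -
  assume c: "c \<in> upts"
  then obtain h where h: "h \<in> elts" "c = cls h" by (rule upts_cases)
  then have "h \<in> c" using equiv_class_self[OF equiv_aeq] by (simp add: cls_def)
  then have "rep c \<in> c" unfolding rep_def by (rule someI[where P = "\<lambda>h. h \<in> c"])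
  then have hr: "(h, rep c) \<in> aeq" using h by (simp add: cls_def)
  then show "rep c \<in> elts" by (simp add: aeq_def)
  show "cls (rep c) = c" using equiv_class_eq[OF equiv_aeq hr] h by (simp add: cls_def)
qed

lemma AE_eq_rep_cls: "h \<in> elts \<Longrightarrow> AE (\<lambda>\<sigma>. h \<sigma> = rep (cls h) \<sigma>)"
  using cls_eq_iff rep_in_elts cls_rep cls_in_upts by metis

lemma AE_app_cong:
  assumes "h \<in> elts" "h' \<in> elts" "AE (\<lambda>\<sigma>. h \<sigma> = h' \<sigma>)" "finitary Q"
  shows "AE (\<lambda>\<sigma>. Q \<sigma> (h \<sigma>)) \<longleftrightarrow> AE (\<lambda>\<sigma>. Q \<sigma> (h' \<sigma>))"
  using assms AE_mp[OF assms(3)] finitary_app by (metis (mono_tags, lifting))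

lemma AE_app_rep_cls:
  "h \<in> elts \<Longrightarrow> finitary Q \<Longrightarrow> AE (\<lambda>\<sigma>. Q \<sigma> (rep (cls h) \<sigma>)) \<longleftrightarrow> AE (\<lambda>\<sigma>. Q \<sigma> (h \<sigma>))"
  using AE_app_cong[OF _ _ AE_eq_rep_cls] rep_in_elts cls_in_upts by metis

lemma cls_in_internal_iff:
  assumes h: "h \<in> elts" and E: "finitary E"
  shows "cls h \<in> internal E \<longleftrightarrow> AE (\<lambda>\<sigma>. h \<sigma> \<in> E \<sigma>)"
proof -
  have "finitary (\<lambda>\<sigma> x. x \<in> E \<sigma>)" using finitary_comp[OF E, of "\<lambda>S x. x \<in> S"] .
  from AE_app_rep_cls[OF h this] show ?thesis by (simp add: internal_def cls_in_upts[OF h])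
qed

lemma internal_eqI:
  assumes "X \<subseteq> upts" "finitary E" "\<And>h. h \<in> elts \<Longrightarrow> cls h \<in> X \<longleftrightarrow> AE (\<lambda>\<sigma>. h \<sigma> \<in> E \<sigma>)"
  shows "X = internal E"
proof -
  have "c \<in> X \<longleftrightarrow> c \<in> internal E" if "c \<in> upts" for c
    using that assms(2,3) cls_in_internal_iff by (metis upts_cases)
  then show ?thesis using assms(1) internal_def by auto
qed

lemma ex_skolem_elt:
  assumes "finitary Q"
  shows "\<exists>h\<in>elts. \<forall>\<sigma>. (\<exists>v\<in>W. Q \<sigma> v) \<longrightarrow> Q \<sigma> (h \<sigma>)"
proof -
  define pick where "pick R = (SOME v. v \<in> W \<and> ((\<exists>v\<in>W. R v) \<longrightarrow> R v))" for R
  define h where "h \<sigma> = pick (Q \<sigma>)" for \<sigma>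
  have pick: "pick R \<in> W \<and> ((\<exists>v\<in>W. R v) \<longrightarrow> R (pick R))" for R
    unfolding pick_def by (rule someI_ex) (use nonempty in blast)
  have "finitary h" unfolding h_def using assms by (rule finitary_comp)
  then have "h \<in> elts" using pick by (simp add: elts_def h_def)
  moreover have "\<forall>\<sigma>. (\<exists>v\<in>W. Q \<sigma> v) \<longrightarrow> Q \<sigma> (h \<sigma>)"
    unfolding h_def using pick by blast
  ultimately show ?thesis by blast
qed

lemma AE_bex_iff:
  assumes Q: "finitary Q"
  shows "AE (\<lambda>\<sigma>. \<exists>v\<in>W. Q \<sigma> v) \<longleftrightarrow> (\<exists>h\<in>elts. AE (\<lambda>\<sigma>. Q \<sigma> (h \<sigma>)))"
proof
  assume ex: "AE (\<lambda>\<sigma>. \<exists>v\<in>W. Q \<sigma> v)"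
  obtain h where h: "h \<in> elts" "\<And>\<sigma>. (\<exists>v\<in>W. Q \<sigma> v) \<longrightarrow> Q \<sigma> (h \<sigma>)"
    using ex_skolem_elt[OF Q] by blast
  have "AE (\<lambda>\<sigma>. Q \<sigma> (h \<sigma>))"
    by (rule AE_mono[OF ex]) (use h finitary_app[OF h(1) Q] in auto)
  then show "\<exists>h\<in>elts. AE (\<lambda>\<sigma>. Q \<sigma> (h \<sigma>))" using h(1) by blast
next
  assume "\<exists>h\<in>elts. AE (\<lambda>\<sigma>. Q \<sigma> (h \<sigma>))"
  then obtain h where h: "h \<in> elts" "AE (\<lambda>\<sigma>. Q \<sigma> (h \<sigma>))" by blast
  show "AE (\<lambda>\<sigma>. \<exists>v\<in>W. Q \<sigma> v)"
    by (rule AE_mono[OF h(2)]) (use elts_in_W[OF h(1)] finitary_comp[OF Q] in auto)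
qed

lemma AE_subset_if_internal_subset:
  assumes E: "finitary E" and E': "finitary E'" and sub: "internal E \<subseteq> internal E'"
  shows "AE (\<lambda>\<sigma>. E \<sigma> \<inter> W \<subseteq> E' \<sigma>)"
proof (rule ccontr)
  have eq: "(\<lambda>\<sigma>. \<not> E \<sigma> \<inter> W \<subseteq> E' \<sigma>) = (\<lambda>\<sigma>. \<exists>v\<in>W. v \<in> E \<sigma> \<and> v \<notin> E' \<sigma>)" by auto
  assume "\<not> AE (\<lambda>\<sigma>. E \<sigma> \<inter> W \<subseteq> E' \<sigma>)"
  then have "AE (\<lambda>\<sigma>. \<not> E \<sigma> \<inter> W \<subseteq> E' \<sigma>)"
    using AE_not[OF finitary_comp2[OF E E', of "\<lambda>A B. A \<inter> W \<subseteq> B"]] by simp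
  then have "AE (\<lambda>\<sigma>. \<exists>v\<in>W. v \<in> E \<sigma> \<and> v \<notin> E' \<sigma>)" by (simp only: eq)
  moreover have "finitary (\<lambda>\<sigma> v. v \<in> E \<sigma> \<and> v \<notin> E' \<sigma>)"
    using finitary_comp2[OF E E', of "\<lambda>A B v. v \<in> A \<and> v \<notin> B"] .
  ultimately obtain h where h: "h \<in> elts" "AE (\<lambda>\<sigma>. h \<sigma> \<in> E \<sigma> \<and> h \<sigma> \<notin> E' \<sigma>)"
    using AE_bex_iff by blast
  have fin: "finitary (\<lambda>\<sigma>. h \<sigma> \<in> E \<sigma>)" "finitary (\<lambda>\<sigma>. h \<sigma> \<in> E' \<sigma>)"
    using finitary_mem[OF h(1) E] finitary_mem[OF h(1) E'] .
  then have "AE (\<lambda>\<sigma>. h \<sigma> \<in> E \<sigma>)" "\<not> AE (\<lambda>\<sigma>. h \<sigma> \<in> E' \<sigma>)"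
    using h(2) AE_conj[OF fin(1) finitary_comp[OF fin(2)]] AE_not[OF fin(2)] by simp_all
  then show False using sub cls_in_internal_iff[OF h(1)] E E' by blast
qed

lemma internal_in_unb_iff:
  assumes h: "h \<in> elts" and E: "finitary E" and EW: "\<And>\<sigma>. E \<sigma> \<subseteq> W"
  shows "internal E \<in> unb (cls h) \<longleftrightarrow> AE (\<lambda>\<sigma>. E \<sigma> \<in> nb F (h \<sigma>))"
proof -
  let ?r = "rep (cls h)"
  have r: "?r \<in> elts" using rep_in_elts[OF cls_in_upts[OF h]] .
  have fin: "finitary (\<lambda>\<sigma> w. E \<sigma> \<in> nb F w)" using E by (rule finitary_comp)
  have cong: "AE (\<lambda>\<sigma>. E \<sigma> \<in> nb F (?r \<sigma>)) \<longleftrightarrow> AE (\<lambda>\<sigma>. E \<sigma> \<in> nb F (h \<sigma>))"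
    using AE_app_rep_cls[OF h fin] .
  show ?thesis
  proof
    assume "internal E \<in> unb (cls h)"
    then obtain E' where E': "finitary E'" "AE (\<lambda>\<sigma>. E' \<sigma> \<in> nb F (?r \<sigma>))" "internal E' \<subseteq> internal E"
      by (auto simp: unb_def)
    have "AE (\<lambda>\<sigma>. E \<sigma> \<in> nb F (?r \<sigma>))"
    proof (rule AE_mp[OF E'(2) AE_subset_if_internal_subset[OF E'(1) E E'(3)]])
      fix \<sigma> assume "E' \<sigma> \<in> nb F (?r \<sigma>)" "E' \<sigma> \<inter> W \<subseteq> E \<sigma>"
      moreover have "?r \<sigma> \<in> W" using elts_in_W[OF r] .
      ultimately show "E \<sigma> \<in> nb F (?r \<sigma>)"
        using nb_subset nb_mono EW by (metis inf.absorb_iff1)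
    qed (rule finitary_app[OF r fin])
    then show "AE (\<lambda>\<sigma>. E \<sigma> \<in> nb F (h \<sigma>))" using cong by simp
  next
    assume "AE (\<lambda>\<sigma>. E \<sigma> \<in> nb F (h \<sigma>))"
    then show "internal E \<in> unb (cls h)" using cong E by (auto simp: unb_def internal_def)
  qed
qed

lemma finitary_sat_upd:
  assumes "\<And>z. H z \<in> elts"
  shows "finitary (\<lambda>\<sigma> v. sat F ((\<lambda>z. H z \<sigma>)(x := v)) p)"
proof (rule finitary_if_determined[OF finite_fv[of p]])
  show "finitary (H z)" for z using assms by (rule elts_finitary)
  fix \<sigma> \<sigma>' :: "nat \<Rightarrow> 'a set set" assume "\<forall>z\<in>fv p. H z \<sigma> = H z \<sigma>'"
  then show "(\<lambda>v. sat F ((\<lambda>z. H z \<sigma>)(x := v)) p) = (\<lambda>v. sat F ((\<lambda>z. H z \<sigma>')(x := v)) p)"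
    by (intro ext sat_cong_fv) simp
qed

lemma finitary_sat:
  assumes "\<And>z. H z \<in> elts"
  shows "finitary (\<lambda>\<sigma>. sat F (\<lambda>z. H z \<sigma>) p)"
proof (rule finitary_if_determined[OF finite_fv[of p]])
  show "finitary (H z)" for z using assms by (rule elts_finitary)
  fix \<sigma> \<sigma>' :: "nat \<Rightarrow> 'a set set" assume "\<forall>z\<in>fv p. H z \<sigma> = H z \<sigma>'"
  then show "sat F (\<lambda>z. H z \<sigma>) p = sat F (\<lambda>z. H z \<sigma>') p" by (intro sat_cong_fv) simp
qed

lemma sat_UP_fun_upd:
  assumes IH: "\<And>H. (\<And>z. H z \<in> elts) \<Longrightarrow> sat UP (\<lambda>z. cls (H z)) p \<longleftrightarrow> AE (\<lambda>\<sigma>. sat F (\<lambda>z. H z \<sigma>) p)"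
    and H: "\<And>z. H z \<in> elts" and h: "h \<in> elts"
  shows "sat UP ((\<lambda>z. cls (H z))(x := cls h)) p \<longleftrightarrow> AE (\<lambda>\<sigma>. sat F ((\<lambda>z. H z \<sigma>)(x := h \<sigma>)) p)"
proof -
  have "(\<lambda>z. cls (H z))(x := cls h) = (\<lambda>z. cls ((H(x := h)) z))"
    and "(\<lambda>\<sigma>. sat F ((\<lambda>z. H z \<sigma>)(x := h \<sigma>)) p) = (\<lambda>\<sigma>. sat F (\<lambda>z. (H(x := h)) z \<sigma>) p)"
    by (auto intro!: arg_cong2[where f = "sat F"] simp: fun_eq_iff)
  then show ?thesis using IH[of "H(x := h)"] H h by simp
qed

lemma bex_upts_iff_AE:
  assumes Q: "finitary Q" and P: "\<And>h. h \<in> elts \<Longrightarrow> P (cls h) \<longleftrightarrow> AE (\<lambda>\<sigma>. Q \<sigma> (h \<sigma>))"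
  shows "(\<exists>c\<in>upts. P c) \<longleftrightarrow> AE (\<lambda>\<sigma>. \<exists>v\<in>W. Q \<sigma> v)"
proof -
  have "(\<exists>c\<in>upts. P c) \<longleftrightarrow> (\<exists>h\<in>elts. P (cls h))"
    by (auto intro: cls_in_upts elim: upts_cases)
  also have "\<dots> \<longleftrightarrow> AE (\<lambda>\<sigma>. \<exists>v\<in>W. Q \<sigma> v)" using P AE_bex_iff[OF Q] by simp
  finally show ?thesis .
qed

lemma Collect_upts_eq_internal:
  assumes Q: "finitary Q" and P: "\<And>h. h \<in> elts \<Longrightarrow> P (cls h) \<longleftrightarrow> AE (\<lambda>\<sigma>. Q \<sigma> (h \<sigma>))"
  shows "{c \<in> upts. P c} = internal (\<lambda>\<sigma>. {v \<in> W. Q \<sigma> v})"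
proof (rule internal_eqI)
  show "finitary (\<lambda>\<sigma>. {v \<in> W. Q \<sigma> v})" using Q by (rule finitary_comp)
  fix h assume h: "h \<in> elts"
  then show "cls h \<in> {c \<in> upts. P c} \<longleftrightarrow> AE (\<lambda>\<sigma>. h \<sigma> \<in> {v \<in> W. Q \<sigma> v})"
    using P cls_in_upts elts_in_W by simp
qed blast

theorem sat_UP_iff:
  "(\<And>z. H z \<in> elts) \<Longrightarrow> sat UP (\<lambda>z. cls (H z)) p \<longleftrightarrow> AE (\<lambda>\<sigma>. sat F (\<lambda>z. H z \<sigma>) p)"
proof (induction p arbitrary: H)
  case (Eq x y)
  then show ?case by (simp add: cls_eq_iff)
next
  case (Neg p)
  then show ?case by (simp add: AE_not[OF finitary_sat[OF Neg.prems]])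
next
  case (Conj p q)
  then show ?case by (simp add: AE_conj[OF finitary_sat[OF Conj.prems] finitary_sat[OF Conj.prems]])
next
  case (Ex x p)
  have "(\<exists>c\<in>upts. sat UP ((\<lambda>z. cls (H z))(x := c)) p)
      \<longleftrightarrow> AE (\<lambda>\<sigma>. \<exists>v\<in>W. sat F ((\<lambda>z. H z \<sigma>)(x := v)) p)"
    by (rule bex_upts_iff_AE[OF finitary_sat_upd[OF Ex.prems]])
      (rule sat_UP_fun_upd[OF Ex.IH]; use Ex.prems in auto)
  then show ?case by (simp add: pts_UP)
next
  case (Box x y p)
  define E where "E \<sigma> = {v \<in> W. sat F ((\<lambda>z. H z \<sigma>)(y := v)) p}" for \<sigma>
  have E: "finitary E" unfolding E_def using finitary_sat_upd[OF Box.prems] by (rule finitary_comp)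
  have "{c \<in> upts. sat UP ((\<lambda>z. cls (H z))(y := c)) p} = internal E"
    unfolding E_def
    by (rule Collect_upts_eq_internal[OF finitary_sat_upd[OF Box.prems]])
      (rule sat_UP_fun_upd[OF Box.IH]; use Box.prems in auto)
  then have "sat UP (\<lambda>z. cls (H z)) (Box x y p) \<longleftrightarrow> internal E \<in> unb (cls (H x))"
    by (simp add: pts_UP nb_UP)
  also have "\<dots> \<longleftrightarrow> AE (\<lambda>\<sigma>. E \<sigma> \<in> nb F (H x \<sigma>))"
    by (rule internal_in_unb_iff[OF Box.prems E]) (auto simp: E_def)
  finally show ?case by (simp add: E_def)
qed

lemma Th_UP: "Th UP = Th F"
proof (rule Th_eqI)
  fix p assume p: "sentence p"
  obtain w where w: "w \<in> W" using nonempty by blast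
  have "holds UP p \<longleftrightarrow> sat UP (\<lambda>z. cls (\<lambda>\<sigma>. w)) p" by (rule holds_iff_sat[OF p])
  also have "\<dots> \<longleftrightarrow> AE (\<lambda>\<sigma>. sat F (\<lambda>z. w) p)" by (rule sat_UP_iff) (rule const_in_elts[OF w])
  also have "\<dots> \<longleftrightarrow> holds F p" by (simp add: AE_const holds_iff_sat[OF p, of F "\<lambda>z. w"])
  finally show "holds UP p \<longleftrightarrow> holds F p" .
qed

lemma monotonic_UP: "monotonic UP"
  unfolding monotonic_def nframe_def pts_UP nb_UP unb_def by blast

lemma internal_Int:
  assumes "finitary E1" "finitary E2"
  shows "internal (\<lambda>\<sigma>. E1 \<sigma> \<inter> E2 \<sigma>) = internal E1 \<inter> internal E2"
proof -
  have "AE (\<lambda>\<sigma>. rep c \<sigma> \<in> E1 \<sigma> \<inter> E2 \<sigma>) \<longleftrightarrow> AE (\<lambda>\<sigma>. rep c \<sigma> \<in> E1 \<sigma>) \<and> AE (\<lambda>\<sigma>. rep c \<sigma> \<in> E2 \<sigma>)"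
    if "c \<in> upts" for c
    using AE_conj finitary_mem[OF rep_in_elts[OF that]] assms by simp
  then show ?thesis by (auto simp: internal_def)
qed

lemma quasi_filter_UP:
  assumes qf: "quasi_filter F"
  shows "quasi_filter UP"
proof (rule quasi_filterI[OF monotonic_UP], unfold pts_UP nb_UP)
  fix c X Y assume c: "c \<in> upts" and "X \<in> unb c" "Y \<in> unb c"
  then obtain E1 E2 where E1: "finitary E1" "AE (\<lambda>\<sigma>. E1 \<sigma> \<in> nb F (rep c \<sigma>))" "internal E1 \<subseteq> X"
    and E2: "finitary E2" "AE (\<lambda>\<sigma>. E2 \<sigma> \<in> nb F (rep c \<sigma>))" "internal E2 \<subseteq> Y"
    and XY: "X \<subseteq> upts" "Y \<subseteq> upts"
    by (auto simp: unb_def)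
  have fin: "finitary (\<lambda>\<sigma>. E1 \<sigma> \<inter> E2 \<sigma>)" using E1(1) E2(1) by (rule finitary_comp2)
  have "finitary (\<lambda>\<sigma>. E1 \<sigma> \<inter> E2 \<sigma> \<in> nb F (rep c \<sigma>))"
    using finitary_app[OF rep_in_elts[OF c] finitary_comp[OF fin, of "\<lambda>A w. A \<in> nb F w"]] .
  then have "AE (\<lambda>\<sigma>. E1 \<sigma> \<inter> E2 \<sigma> \<in> nb F (rep c \<sigma>))"
    by (intro AE_mp[OF E1(2) E2(2)] quasi_filter_Int[OF qf] elts_in_W rep_in_elts[OF c])
  moreover have "internal (\<lambda>\<sigma>. E1 \<sigma> \<inter> E2 \<sigma>) \<subseteq> X \<inter> Y"
    using internal_Int[OF E1(1) E2(1)] E1(3) E2(3) by blast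
  ultimately show "X \<inter> Y \<in> unb c" using fin XY by (auto simp: unb_def)
qed

lemma std_uf_in_Uf:
  assumes c: "c \<in> upts"
  shows "std_uf c \<in> Uf W"
proof -
  let ?h = "rep c"
  have h: "?h \<in> elts" using rep_in_elts[OF c] .
  have fin: "finitary (\<lambda>\<sigma>. ?h \<sigma> \<in> b)" for b using elts_finitary[OF h] by (rule finitary_comp)
  have "(\<lambda>\<sigma>. ?h \<sigma> \<in> W) = (\<lambda>\<sigma>. True)" using elts_in_W[OF h] by simp
  then have top: "AE (\<lambda>\<sigma>. ?h \<sigma> \<in> W)" by (simp add: AE_const)
  have int: "AE (\<lambda>\<sigma>. ?h \<sigma> \<in> X \<and> ?h \<sigma> \<in> Y)"
    if "AE (\<lambda>\<sigma>. ?h \<sigma> \<in> X)" "AE (\<lambda>\<sigma>. ?h \<sigma> \<in> Y)" for X Y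
    using AE_mp[OF that _ fin[of "X \<inter> Y"]] by simp
  have up: "AE (\<lambda>\<sigma>. ?h \<sigma> \<in> Y)" if "AE (\<lambda>\<sigma>. ?h \<sigma> \<in> X)" "X \<subseteq> Y" for X Y
    using AE_mono[OF that(1) _ fin] that(2) by blast
  have compl: "AE (\<lambda>\<sigma>. ?h \<sigma> \<in> X) \<or> AE (\<lambda>\<sigma>. ?h \<sigma> \<in> W \<and> ?h \<sigma> \<notin> X)" for X
    using AE_mp[OF top iffD2[OF AE_not[OF fin]] _ fin[of "W - X"]] by auto
  show ?thesis
    unfolding Uf_def ultrafilter_on_def std_uf_def
    using top int up compl by (auto simp: AE_const)
qed

lemma std_uf_cls: "h \<in> elts \<Longrightarrow> std_uf (cls h) = {b. b \<subseteq> W \<and> AE (\<lambda>\<sigma>. h \<sigma> \<in> b)}"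
  using cls_in_internal_iff[OF _ finitary_const] by (auto simp: std_uf_def internal_def cls_in_upts)

text \<open>The fresh coordinate \<open>\<sigma> m\<close> is almost surely a finite set containing any given member
  \<open>b\<close> of \<open>u\<close>, so a point of \<open>E \<sigma>\<close> chosen in the intersection of the members of \<open>u\<close> listed
  in \<open>\<sigma> m\<close> lies almost surely in every \<open>b \<in> u\<close>.\<close>

lemma ex_elt_realizing_type:
  assumes E: "finitary E" and u: "ultrafilter_on W u"
    and meets: "\<And>b. b \<in> u \<Longrightarrow> AE (\<lambda>\<sigma>. E \<sigma> \<inter> b \<noteq> {})"
  shows "\<exists>h\<in>elts. \<forall>b\<in>u. AE (\<lambda>\<sigma>. h \<sigma> \<in> E \<sigma> \<inter> b)"
proof -
  obtain m where m: "depends_below m E" using E by (auto simp: finitary_def)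
  define Q where "Q \<sigma> v \<longleftrightarrow> v \<in> E \<sigma> \<and> v \<in> \<Inter>(\<sigma> m \<inter> u)" for \<sigma> v
  have "depends_below (Suc m) Q"
    using m unfolding Q_def depends_below_def by (metis lessI less_SucI)
  then obtain h where h: "h \<in> elts" "\<And>\<sigma>. (\<exists>v\<in>W. Q \<sigma> v) \<longrightarrow> Q \<sigma> (h \<sigma>)"
    using ex_skolem_elt unfolding finitary_def by blast
  have "AE (\<lambda>\<sigma>. h \<sigma> \<in> E \<sigma> \<inter> b)" if b: "b \<in> u" for b
  proof -
    define R where "R \<sigma> j \<longleftrightarrow> (\<exists>v\<in>W. v \<in> E \<sigma> \<and> v \<in> \<Inter>(j \<inter> u)) \<and> b \<in> j" for \<sigma> j
    have R: "depends_below m R" using m unfolding R_def depends_below_def by metis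
    have "eventually (\<lambda>j. AE (\<lambda>\<sigma>. R \<sigma> j)) D"
    proof (rule eventually_mono[OF eventually_finite_mem[of b]])
      fix j assume j: "finite j \<and> b \<in> j"
      have "\<Inter>(j \<inter> u) \<inter> W \<in> u" using j by (intro ultrafilter_on_Inter[OF u]) auto
      then have "AE (\<lambda>\<sigma>. E \<sigma> \<inter> (\<Inter>(j \<inter> u) \<inter> W) \<noteq> {})" by (rule meets)
      moreover have "finitary (\<lambda>\<sigma>. R \<sigma> j)"
        using depends_below_comp[OF R, of "\<lambda>r. r j"] by (auto simp: finitary_def)
      ultimately show "AE (\<lambda>\<sigma>. R \<sigma> j)" using j by (auto simp: R_def elim!: AE_mono)
    qed
    then have "AE (\<lambda>\<sigma>. R \<sigma> (\<sigma> m))" by (rule AE_fresh_coordinate[OF R])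
    moreover have "finitary (\<lambda>\<sigma>. h \<sigma> \<in> E \<sigma> \<inter> b)"
      using finitary_mem[OF h(1) finitary_comp[OF E, of "\<lambda>A. A \<inter> b"]] .
    ultimately show ?thesis using h(2) b by (auto simp: R_def Q_def elim!: AE_mono)
  qed
  then show ?thesis using h(1) by blast
qed

lemma ex_elt_realizing:
  assumes E: "finitary E" and u: "u \<in> Uf W" and meets: "\<And>b. b \<in> u \<Longrightarrow> AE (\<lambda>\<sigma>. E \<sigma> \<inter> b \<noteq> {})"
  shows "\<exists>h\<in>elts. AE (\<lambda>\<sigma>. h \<sigma> \<in> E \<sigma>) \<and> std_uf (cls h) = u"
proof -
  have uu: "ultrafilter_on W u" using u by (simp add: Uf_def)
  obtain h where h: "h \<in> elts" and key: "\<And>b. b \<in> u \<Longrightarrow> AE (\<lambda>\<sigma>. h \<sigma> \<in> E \<sigma> \<inter> b)"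
    using ex_elt_realizing_type[OF E uu meets] by blast
  have "u \<subseteq> std_uf (cls h)"
  proof
    fix b assume b: "b \<in> u"
    have "AE (\<lambda>\<sigma>. h \<sigma> \<in> b)"
      by (rule AE_mono[OF key[OF b] _ finitary_comp[OF elts_finitary[OF h]]]) blast
    moreover have "b \<subseteq> W" using uu b by (auto simp: ultrafilter_on_def)
    ultimately show "b \<in> std_uf (cls h)" by (simp add: std_uf_cls[OF h])
  qed
  then have "std_uf (cls h) = u"
    using ultrafilter_on_subset_eq[OF uu] std_uf_in_Uf[OF cls_in_upts[OF h]] unfolding Uf_def
    by (metis mem_Collect_eq)
  moreover have "W \<in> u" using uu by (simp add: ultrafilter_on_def)
  then have "AE (\<lambda>\<sigma>. h \<sigma> \<in> E \<sigma>)" by (rule AE_mono[OF key _ finitary_mem[OF h E]]) blast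
  ultimately show ?thesis using h by blast
qed

lemma ex_internal_nb_below:
  assumes h: "h \<in> elts" and fin_Inter: "\<And>s. finite s \<Longrightarrow> s \<subseteq> S \<Longrightarrow> AE (\<lambda>\<sigma>. \<Inter>s \<inter> W \<in> nb F (h \<sigma>))"
  shows "\<exists>E. finitary E \<and> AE (\<lambda>\<sigma>. E \<sigma> \<in> nb F (h \<sigma>)) \<and> (\<forall>b\<in>S. AE (\<lambda>\<sigma>. E \<sigma> \<subseteq> b))"
proof -
  obtain m where m: "depends_below m h" using elts_finitary[OF h] by (auto simp: finitary_def)
  define E where "E \<sigma> = \<Inter>(\<sigma> m \<inter> S) \<inter> W" for \<sigma>
  have "depends_below (Suc m) E" unfolding E_def depends_below_def by simp
  then have "finitary E" by (auto simp: finitary_def)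
  moreover have "AE (\<lambda>\<sigma>. E \<sigma> \<in> nb F (h \<sigma>))"
    unfolding E_def
  proof (rule AE_fresh_coordinate[of m "\<lambda>\<sigma> j. \<Inter>(j \<inter> S) \<inter> W \<in> nb F (h \<sigma>)"])
    show "depends_below m (\<lambda>\<sigma> j. \<Inter>(j \<inter> S) \<inter> W \<in> nb F (h \<sigma>))"
      using m by (rule depends_below_comp)
    show "eventually (\<lambda>j. AE (\<lambda>\<sigma>. \<Inter>(j \<inter> S) \<inter> W \<in> nb F (h \<sigma>))) D"
      by (rule eventually_mono[OF eventually_finite_mem[of "{}"]]) (simp add: fin_Inter)
  qed
  moreover have "AE (\<lambda>\<sigma>. E \<sigma> \<subseteq> b)" if b: "b \<in> S" for b
    unfolding E_def
  proof (rule AE_fresh_coordinate[of m "\<lambda>\<sigma> j. \<Inter>(j \<inter> S) \<inter> W \<subseteq> b"])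
    show "eventually (\<lambda>j. AE (\<lambda>\<sigma>. \<Inter>(j \<inter> S) \<inter> W \<subseteq> b)) D"
      by (rule eventually_mono[OF eventually_finite_mem[of b]]) (use b in \<open>auto simp: AE_const\<close>)
  qed (rule depends_below_const)
  ultimately show ?thesis by blast
qed

lemma std_uf_image_internal:
  assumes E: "finitary E"
  shows "std_uf ` internal E = Uf W \<inter> (\<Inter>a\<in>{a. a \<subseteq> W \<and> AE (\<lambda>\<sigma>. E \<sigma> \<inter> W \<subseteq> a)}. basic W a)"
proof (intro equalityI subsetI)
  fix u assume "u \<in> std_uf ` internal E"
  then obtain c where c: "c \<in> upts" "AE (\<lambda>\<sigma>. rep c \<sigma> \<in> E \<sigma>)" and u: "u = std_uf c"
    by (auto simp: internal_def)
  have r: "rep c \<in> elts" using rep_in_elts[OF c(1)] .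
  have "a \<in> u" if a: "a \<subseteq> W" "AE (\<lambda>\<sigma>. E \<sigma> \<inter> W \<subseteq> a)" for a
  proof -
    have "AE (\<lambda>\<sigma>. rep c \<sigma> \<in> a)"
      by (rule AE_mp[OF a(2) c(2)]) (use elts_in_W[OF r] finitary_comp[OF elts_finitary[OF r]] in auto)
    then show ?thesis using a(1) by (simp add: u std_uf_def)
  qed
  then show "u \<in> Uf W \<inter> (\<Inter>a\<in>{a. a \<subseteq> W \<and> AE (\<lambda>\<sigma>. E \<sigma> \<inter> W \<subseteq> a)}. basic W a)"
    using std_uf_in_Uf[OF c(1)] u by (auto simp: basic_def)
next
  fix u assume u: "u \<in> Uf W \<inter> (\<Inter>a\<in>{a. a \<subseteq> W \<and> AE (\<lambda>\<sigma>. E \<sigma> \<inter> W \<subseteq> a)}. basic W a)"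
  then have uu: "ultrafilter_on W u" by (simp add: Uf_def)
  have meets: "AE (\<lambda>\<sigma>. E \<sigma> \<inter> b \<noteq> {})" if b: "b \<in> u" for b
  proof (rule ccontr)
    have fin: "finitary (\<lambda>\<sigma>. E \<sigma> \<inter> b \<noteq> {})" using E by (rule finitary_comp)
    assume "\<not> AE (\<lambda>\<sigma>. E \<sigma> \<inter> b \<noteq> {})"
    then have "AE (\<lambda>\<sigma>. \<not> E \<sigma> \<inter> b \<noteq> {})" using AE_not[OF fin] by blast
    then have "AE (\<lambda>\<sigma>. E \<sigma> \<inter> W \<subseteq> W - b)"
      by (rule AE_mono) (auto intro: finitary_comp[OF E])
    then have "W - b \<in> u" using u by (auto simp: basic_def)
    then show False using ultrafilter_on_compl[OF uu b] by blast
  qed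
  moreover have "u \<in> Uf W" using u by blast
  ultimately obtain h where h: "h \<in> elts" "AE (\<lambda>\<sigma>. h \<sigma> \<in> E \<sigma>)" "std_uf (cls h) = u"
    using ex_elt_realizing[OF E] by blast
  then show "u \<in> std_uf ` internal E" using cls_in_internal_iff[OF h(1) E] by blast
qed

lemma std_uf_image: "std_uf ` upts = Uf W"
proof (intro equalityI subsetI)
  fix u assume u: "u \<in> Uf W"
  have "AE (\<lambda>\<sigma>. W \<inter> b \<noteq> {})" if "b \<in> u" for b
  proof -
    have "b \<subseteq> W" "b \<noteq> {}" using u that by (auto simp: Uf_def ultrafilter_on_def)
    then show ?thesis by (simp add: AE_const Int_absorb1)
  qed
  then obtain h where "h \<in> elts" "std_uf (cls h) = u"
    using ex_elt_realizing[OF finitary_const u] by meson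
  then show "u \<in> std_uf ` upts" using cls_in_upts by blast
qed (auto simp: std_uf_in_Uf)

lemma nb_ue_std_uf_if_unb:
  assumes c: "c \<in> upts" and U: "U \<subseteq> Uf W" and X: "{v \<in> upts. std_uf v \<in> U} \<in> unb c"
  shows "U \<in> nb (ue F) (std_uf c)"
proof -
  obtain E where E: "finitary E" "AE (\<lambda>\<sigma>. E \<sigma> \<in> nb F (rep c \<sigma>))"
    "internal E \<subseteq> {v \<in> upts. std_uf v \<in> U}"
    using X by (auto simp: unb_def)
  have r: "rep c \<in> elts" using rep_in_elts[OF c] .
  let ?K = "std_uf ` internal E"
  have "closed_uf W ?K"
    unfolding closed_uf_def std_uf_image_internal[OF E(1)]
    by (intro exI[of _ "{a. a \<subseteq> W \<and> AE (\<lambda>\<sigma>. E \<sigma> \<inter> W \<subseteq> a)}"]) auto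
  moreover have "?K \<subseteq> U" using E(3) by blast
  moreover have "cbox F a \<in> std_uf c" if a: "a \<subseteq> W" "?K \<subseteq> basic W a" for a
  proof -
    have "internal E \<subseteq> internal (\<lambda>\<sigma>. a)"
      using a by (auto simp: internal_def std_uf_def basic_def)
    then have "AE (\<lambda>\<sigma>. E \<sigma> \<inter> W \<subseteq> a)"
      by (rule AE_subset_if_internal_subset[OF E(1) finitary_const])
    then have "AE (\<lambda>\<sigma>. rep c \<sigma> \<in> cbox F a)"
    proof (rule AE_mp[OF E(2)])
      fix \<sigma> assume e: "E \<sigma> \<in> nb F (rep c \<sigma>)" "E \<sigma> \<inter> W \<subseteq> a"
      have w: "rep c \<sigma> \<in> W" using elts_in_W[OF r] .
      have "E \<sigma> \<subseteq> a" using nb_subset[OF w e(1)] e(2) by blast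
      then show "rep c \<sigma> \<in> cbox F a" using nb_mono[OF w e(1) _ a(1)] w by (simp add: cbox_def)
    qed (rule finitary_comp[OF elts_finitary[OF r]])
    then show ?thesis by (auto simp: std_uf_def cbox_def)
  qed
  ultimately show ?thesis using U by (auto simp: nb_ue)
qed

lemma unb_if_nb_ue_std_uf:
  assumes c: "c \<in> upts" and U: "U \<in> nb (ue F) (std_uf c)"
  shows "{v \<in> upts. std_uf v \<in> U} \<in> unb c"
proof -
  have r: "rep c \<in> elts" using rep_in_elts[OF c] .
  obtain K where K: "closed_uf W K" "K \<subseteq> U"
    and box: "\<And>a. a \<subseteq> W \<Longrightarrow> K \<subseteq> basic W a \<Longrightarrow> cbox F a \<in> std_uf c"
    using U by (auto simp: nb_ue)
  obtain S where S: "K = Uf W \<inter> (\<Inter>a\<in>S. basic W a)" "S \<subseteq> Pow W"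
    using K(1) by (auto simp: closed_uf_def)
  have "AE (\<lambda>\<sigma>. \<Inter>s \<inter> W \<in> nb F (rep c \<sigma>))" if s: "finite s" "s \<subseteq> S" for s
  proof -
    have "K \<subseteq> basic W (\<Inter>s \<inter> W)"
      using ultrafilter_on_Inter s by (fastforce simp: S basic_def Uf_def)
    then have "cbox F (\<Inter>s \<inter> W) \<in> std_uf c" by (intro box) auto
    then show ?thesis
      by (auto simp: std_uf_def cbox_def elim!: AE_mono intro: finitary_comp[OF elts_finitary[OF r]])
  qed
  then obtain E where E: "finitary E" "AE (\<lambda>\<sigma>. E \<sigma> \<in> nb F (rep c \<sigma>))" "\<forall>b\<in>S. AE (\<lambda>\<sigma>. E \<sigma> \<subseteq> b)"
    using ex_internal_nb_below[OF r] by blast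
  have "std_uf v \<in> K" if v: "v \<in> internal E" for v
  proof -
    have v': "v \<in> upts" "AE (\<lambda>\<sigma>. rep v \<sigma> \<in> E \<sigma>)" using v by (auto simp: internal_def)
    have "AE (\<lambda>\<sigma>. rep v \<sigma> \<in> b)" if "b \<in> S" for b
      using E(3) that v'(2) by (auto elim!: AE_mp intro: finitary_comp[OF elts_finitary[OF rep_in_elts[OF v'(1)]]])
    then show ?thesis using std_uf_in_Uf[OF v'(1)] S by (auto simp: basic_def std_uf_def)
  qed
  then have "internal E \<subseteq> {v \<in> upts. std_uf v \<in> U}" using K(2) by (auto simp: internal_def)
  then show ?thesis using E(1,2) by (auto simp: unb_def)
qed

lemma bounded_morphism_std_uf: "bounded_morphism UP (ue F) std_uf"
  unfolding bounded_morphism_def pts_UP nb_UP pts_ue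
proof (intro conjI ballI allI impI)
  show "std_uf ` upts \<subseteq> Uf W" by (simp add: std_uf_image)
  fix c U assume "c \<in> upts" "U \<subseteq> Uf W"
  then show "{v \<in> upts. std_uf v \<in> U} \<in> unb c \<longleftrightarrow> U \<in> nb (ue F) (std_uf c)"
    using nb_ue_std_uf_if_unb unb_if_nb_ue_std_uf by blast
qed

theorem ue_cover_UP: "ue_cover F UP"
proof -
  have "std_uf ` pts UP = pts (ue F)" by (simp add: pts_UP pts_ue std_uf_image)
  then show ?thesis unfolding ue_cover_def
    using monotonic_UP Th_UP quasi_filter_UP bounded_morphism_std_uf by blast
qed

lemma upts_eq_cls_const_if_finite:
  assumes W: "finite W" and c: "c \<in> upts"
  shows "\<exists>x\<in>W. c = cls (\<lambda>\<sigma>. x)"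
proof -
  obtain h where h: "h \<in> elts" "c = cls h" using c by (rule upts_cases)
  have fin: "finitary (\<lambda>\<sigma>. h \<sigma> = x)" for x using elts_finitary[OF h(1)] by (rule finitary_comp)
  have "(\<lambda>\<sigma>. \<exists>x\<in>W. h \<sigma> = x) = (\<lambda>\<sigma>. True)" using elts_in_W[OF h(1)] by blast
  then have "AE (\<lambda>\<sigma>. \<exists>x\<in>W. h \<sigma> = x)" by (simp add: AE_const)
  then have "\<exists>x\<in>W. AE (\<lambda>\<sigma>. h \<sigma> = x)" by (intro AE_bex_finite[OF W fin])
  then obtain x where "x \<in> W" "AE (\<lambda>\<sigma>. h \<sigma> = x)" by blast
  then show ?thesis using cls_eq_iff[OF h(1) const_in_elts] h(2) by blast
qed

lemma cls_eq_if_agree_on_lists: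
  assumes h: "h \<in> elts" "h' \<in> elts" "depends_below n h" "depends_below n h'"
    and agree: "\<And>l :: 'a set set list. length l = n \<Longrightarrow> {} \<notin> set l \<Longrightarrow> h (nth l) = h' (nth l)"
  shows "cls h = cls h'"
proof -
  have "eventually (\<lambda>j. j \<in> {j. j \<noteq> {}}) D"
    by (rule eventually_mono[OF eventually_finite_mem[of "{}"]]) auto
  then have "iter_eventually D n (\<lambda>\<sigma>. h \<sigma> = h' \<sigma>)"
  proof (rule iter_eventually_mono[OF iter_eventually_all_below])
    fix \<sigma> :: "nat \<Rightarrow> 'a set set" assume \<sigma>: "\<forall>k<n. \<sigma> k \<in> {j. j \<noteq> {}}"
    define l where "l = map \<sigma> [0..<n]"
    have "length l = n" "{} \<notin> set l" using \<sigma> by (auto simp: l_def)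
    moreover have "\<forall>k<n. l ! k = \<sigma> k" by (simp add: l_def)
    then have "h (nth l) = h \<sigma>" "h' (nth l) = h' \<sigma>"
      using h(3,4) unfolding depends_below_def by blast+
    ultimately show "h \<sigma> = h' \<sigma>" using agree by metis
  qed
  moreover have "depends_below n (\<lambda>\<sigma>. h \<sigma> = h' \<sigma>)" using h(3,4) by (rule depends_below_comp2)
  ultimately show ?thesis using cls_eq_iff[OF h(1,2)] AE_iff by blast
qed

text \<open>If \<open>'a\<close> is finite every class is that of a constant. Otherwise a class is coded by the
  values of a representative along all finite sequences of nonempty families, which determine it.\<close>

lemma ex_inj_upts: "\<exists>\<iota> :: 'a up_fun set \<Rightarrow> 'a set set set. inj_on \<iota> upts"
proof (cases "finite (UNIV :: 'a set)")
  case True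
  define K where "K x = cls (\<lambda>\<sigma>. x)" for x
  have "upts \<subseteq> K ` W"
    using upts_eq_cls_const_if_finite finite_subset[OF subset_UNIV True] by (auto simp: K_def)
  then have "inj_on (inv_into W K) upts" by (rule inj_on_inv_into)
  then have "inj_on (\<lambda>c. {{{inv_into W K c}}}) upts" by (auto simp: inj_on_def)
  then show ?thesis by blast
next
  case False
  then have "infinite (UNIV :: 'a set set)" by (metis Pow_UNIV finite_Pow_iff)
  then obtain tag :: "'a set \<times> nat \<Rightarrow> 'a set" where tag: "inj tag" using ex_inj_prod_nat by blast
  define \<iota> where "\<iota> c = (\<lambda>l. list_code tag l {rep c (nth l)}) ` {l. {} \<notin> set l}" for c
  have "inj_on \<iota> upts"
  proof (rule inj_onI)
    fix c c' assume c: "c \<in> upts" "c' \<in> upts" and eq: "\<iota> c = \<iota> c'"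
    note r = rep_in_elts[OF c(1)] rep_in_elts[OF c(2)]
    obtain n where n: "depends_below n (rep c)" "depends_below n (rep c')"
      using finitary_common_bound[of "{c, c'}" rep] elts_finitary r by auto
    have "rep c (nth l) = rep c' (nth l)" if "{} \<notin> set l" for l :: "'a set set list"
    proof -
      have "list_code tag l {rep c (nth l)} \<in> \<iota> c'" using eq that by (auto simp: \<iota>_def)
      then obtain l' where "{} \<notin> set l'" "list_code tag l {rep c (nth l)} = list_code tag l' {rep c' (nth l')}"
        by (auto simp: \<iota>_def)
      then show ?thesis using list_code_inj[OF tag that] by blast
    qed
    then have "cls (rep c) = cls (rep c')" using cls_eq_if_agree_on_lists[OF r n] by blast
    then show "c = c'" using cls_rep c by metis
  qed
  then show ?thesis by blast
qed

end

lemma ex_iterated_ultrapower: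
  fixes F :: "'a nframe"
  assumes "monotonic F" "pts F \<noteq> {}"
  shows "\<exists>D. iterated_ultrapower D F"
proof -
  obtain D :: "'a set set filter" where "D \<le> finite_sets_at_top" "ultrafilter D"
    using ex_ultrafilter_le[OF finite_subsets_at_top_neq_bot] by blast
  then show ?thesis using assms
    by (auto simp: iterated_ultrapower_def iterated_ultrapower_axioms_def)
qed

lemma ex_ue_cover:
  fixes F :: "'a nframe"
  assumes F: "monotonic F"
  shows "\<exists>G :: 'a set set set nframe. ue_cover F G"
proof (cases "pts F = {}")
  case True
  have "inj_on (\<lambda>x. {{{x}}}) (pts F)" by (simp add: inj_on_def)
  then have "ue_cover F (image_frame (\<lambda>x. {{{x}}}) F)"
    by (rule ue_cover_image_frame[OF ue_cover_empty[OF F True]])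
  then show ?thesis by (rule exI)
next
  case False
  then obtain D where "iterated_ultrapower D F" using ex_iterated_ultrapower[OF F] by blast
  then interpret iterated_ultrapower D F .
  obtain \<iota> :: "'a up_fun set \<Rightarrow> 'a set set set" where "inj_on \<iota> upts"
    using ex_inj_upts by blast
  then have "ue_cover F (image_frame \<iota> UP)"
    using ue_cover_image_frame[OF ue_cover_UP] by (simp add: pts_UP)
  then show ?thesis by (rule exI)
qed

theorem lemma4p4:
  fixes F :: "'a nframe"
  assumes "monotonic F"
  shows "(\<exists>G :: 'a set set set nframe. nframe G \<and> Th G = Th F \<and>
            (\<exists>f. bounded_morphism G (ue F) f \<and> f ` pts G = pts (ue F)))
       \<and> (\<exists>G :: 'a set set set nframe. monotonic G \<and> Th G = Th F \<and>
            (\<exists>f. bounded_morphism G (ue F) f \<and> f ` pts G = pts (ue F)))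
       \<and> (quasi_filter F \<longrightarrow>
          (\<exists>G :: 'a set set set nframe. quasi_filter G \<and> Th G = Th F \<and>
            (\<exists>f. bounded_morphism G (ue F) f \<and> f ` pts G = pts (ue F))))"
proof -
  obtain G :: "'a set set set nframe" where G: "ue_cover F G" using ex_ue_cover[OF assms] by blast
  then have "nframe G" by (simp add: ue_cover_def monotonic_def)
  with G show ?thesis unfolding ue_cover_def by blast
qed

end
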